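(* Let $G=(V,E)$ be a graph on $n$ vertices with clique number $\omega(G)$, and let $C^{\mathsf{start}},C^{\mathsf{goal}}$ be cliques of $G$ with $|C^{\mathsf{start}}|=|C^{\mathsf{goal}}|=\omega(G)$. Let $X$ be a $(d,\lambda)$-expander graph on vertex set $V$, let $\ell=\lceil\log n\rceil$, and let $H=(W,F)$, $D^{\mathsf{start}}$, $D^{\mathsf{goal}}$ be as defined in the context. If $\mathrm{val}_G(C^{\mathsf{start}}\leftrightsquigarrow C^{\mathsf{goal}})\ge\omega(G)-1$, then \[\mathrm{val}_H(D^{\mathsf{start}}\leftrightsquigarrow D^{\mathsf{goal}})\ \ge\ |W|\cdot\left(\frac{\omega(G)-1}{|V|}-2\frac{\lambda}{d}\right)^{\ell}.\]
   Context: A $(d,\lambda)$-expander is a $d$-regular graph all of whose adjacency eigenvalues other than the largest have absolute value at most $\lambda$. $W$ is the set of all walks $\vec w=(w_1,\ldots,w_\ell)$ of length $\ell-1$ in $X$ (so $|W|=nd^{\ell-1}$); a walk is identified with its vertex set when writing $\vec w\subseteq C$ or $\vec w_1\cup\vec w_2$. $H$ has an edge between distinct $\vec w_1,\vec w_2\in W$ iff the subgraph of $G$ induced by $\vec w_1\cup\vec w_2$ is a clique. For a clique $C$ of $G$, $D_C:=\{\vec w\in W:\vec w\subseteq C\}$ (a clique of $H$); $D^{\mathsf{start}}:=D_{C^{\mathsf{start}}}$, $D^{\mathsf{goal}}:=D_{C^{\mathsf{goal}}}$. For a graph $K$ and cliques $C,C'$ of $K$, a reconfiguration sequence from $C$ to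 $C'$ is a sequence of cliques of $K$ starting at $C$, ending at $C'$, consecutive ones differing by adding or removing exactly one vertex; $\mathrm{val}_K(C\leftrightsquigarrow C')$ is the maximum over such sequences of the minimum clique size in the sequence.
   Formalization: The base $(\omega(G)-1)/|V|-2\lambda/d$ is also assumed nonnegative; log is base 2, and eigenvalues of X are counted with multiplicity, so a repeated eigenvalue d forces $d\le\lambda$. Apart from conventions, each condition added here is assumed in the paper as well or is needed for the statement above to hold. *)

theory Defs
  imports "HOL-Analysis.Analysis" "Jordan_Normal_Form.Char_Poly"
begin

definition simple_graph :: "'a set \<Rightarrow> ('a \<Rightarrow> 'a \<Rightarrow> bool) \<Rightarrow> bool" where
  "simple_graph V E \<longleftrightarrow> finite V \<and> (\<forall>u v. E u v \<longrightarrow> u \<in> V \<and> v \<in> V \<and> u \<noteq> v \<and> E v u)"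

definition is_clique :: "'a set \<Rightarrow> ('a \<Rightarrow> 'a \<Rightarrow> bool) \<Rightarrow> 'a set \<Rightarrow> bool" where
  "is_clique V E C \<longleftrightarrow> C \<subseteq> V \<and> (\<forall>u\<in>C. \<forall>v\<in>C. u \<noteq> v \<longrightarrow> E u v)"

definition clique_number :: "'a set \<Rightarrow> ('a \<Rightarrow> 'a \<Rightarrow> bool) \<Rightarrow> nat" where
  "clique_number V E = Max (card ` {C. is_clique V E C})"

definition reconf_seq :: "'a set \<Rightarrow> ('a \<Rightarrow> 'a \<Rightarrow> bool) \<Rightarrow> 'a set \<Rightarrow> 'a set \<Rightarrow> 'a set list \<Rightarrow> bool" where
  "reconf_seq V E C C' xs \<longleftrightarrow> xs \<noteq> [] \<and> hd xs = C \<and> last xs = C' \<and>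
     (\<forall>D\<in>set xs. is_clique V E D) \<and>
     (\<forall>i. Suc i < length xs \<longrightarrow>
        (\<exists>v. (v \<notin> xs!i \<and> xs!Suc i = insert v (xs!i)) \<or> (v \<notin> xs!Suc i \<and> xs!i = insert v (xs!Suc i))))"

definition reconf_val :: "'a set \<Rightarrow> ('a \<Rightarrow> 'a \<Rightarrow> bool) \<Rightarrow> 'a set \<Rightarrow> 'a set \<Rightarrow> nat" where
  "reconf_val V E C C' = Max {Min (card ` set xs) | xs. reconf_seq V E C C' xs}"

definition adj_mat :: "nat \<Rightarrow> (nat \<Rightarrow> nat \<Rightarrow> bool) \<Rightarrow> real mat" where
  "adj_mat n X = mat n n (\<lambda>(i, j). if X i j then 1 else 0)"

definition regular :: "nat \<Rightarrow> (nat \<Rightarrow> nat \<Rightarrow> bool) \<Rightarrow> nat \<Rightarrow> bool" where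
  "regular n X d \<longleftrightarrow> (\<forall>v<n. card {u. u < n \<and> X v u} = d)"

(* (d,lambda)-expander: d-regular simple graph on {0..<n} all of whose adjacency eigenvalues
   other than the largest one (= d, removed once, counted with algebraic multiplicity)
   have absolute value at most lambda *)
definition expander :: "nat \<Rightarrow> (nat \<Rightarrow> nat \<Rightarrow> bool) \<Rightarrow> nat \<Rightarrow> real \<Rightarrow> bool" where
  "expander n X d lam \<longleftrightarrow> simple_graph {0..<n} X \<and> regular n X d \<and>
     (\<forall>\<mu>. eigenvalue (adj_mat n X) \<mu> \<and> \<mu> \<noteq> real d \<longrightarrow> \<bar>\<mu>\<bar> \<le> lam) \<and>
     (order (real d) (char_poly (adj_mat n X)) \<ge> 2 \<longrightarrow> real d \<le> lam)"

definition walks :: "nat \<Rightarrow> (nat \<Rightarrow> nat \<Rightarrow> bool) \<Rightarrow> nat \<Rightarrow> nat list set" where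
  "walks n X l = {w. length w = l \<and> set w \<subseteq> {0..<n} \<and> successively X w}"

definition walk_adj :: "(nat \<Rightarrow> nat \<Rightarrow> bool) \<Rightarrow> nat \<Rightarrow> nat list \<Rightarrow> nat list \<Rightarrow> bool" where
  "walk_adj E n w1 w2 \<longleftrightarrow> w1 \<noteq> w2 \<and> is_clique {0..<n} E (set w1 \<union> set w2)"

definition D_of :: "nat \<Rightarrow> (nat \<Rightarrow> nat \<Rightarrow> bool) \<Rightarrow> nat \<Rightarrow> nat set \<Rightarrow> nat list set" where
  "D_of n X l C = {w \<in> walks n X l. set w \<subseteq> C}"

end

theory Submission
  imports Defs
begin

(* A clique C of G gives the clique D_C of H, and C \<subseteq> C' implies D_C \<subseteq> D_C'. Hence an optimal
   reconfiguration sequence C_0, ..., C_m of G lifts to H: each step C_i \<leadsto> C_(i+1) is replaced by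
   adding or deleting the walks of D_(C_(i+1)) - D_(C_i) (or vice versa) one at a time, and every
   clique met on the way contains the smaller of D_(C_i), D_(C_(i+1)). It remains to bound |D_C|
   from below when |C| \<ge> \<omega> - 1. D_C is the set of walks of the induced subgraph X[C], so by the
   Blakley-Roy inequality (proved with Jensen's inequality for ln) it has at least
   |C| (average degree of X[C])^(l-1) elements, and the expander mixing lemma shows that this
   average degree is at least d (|C|/n - 2 lam/d). *)

section \<open>Counting walks: the Blakley--Roy inequality\<close>

lemma sum_weighted_ln_le_ln_sum:
  fixes p a :: "'i \<Rightarrow> real"
  assumes "finite I" "I \<noteq> {}" "\<And>i. i \<in> I \<Longrightarrow> p i \<ge> 0" "sum p I = 1" "\<And>i. i \<in> I \<Longrightarrow> a i > 0"
  shows "(\<Sum>i\<in>I. p i * ln (a i)) \<le> ln (\<Sum>i\<in>I. p i * a i)"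
  using concave_on_sum[OF assms(1,2) ln_concave, of p a] assms by auto

definition walks_in :: "('a \<Rightarrow> 'a \<Rightarrow> bool) \<Rightarrow> 'a set \<Rightarrow> nat \<Rightarrow> 'a list set" where
  "walks_in X S k = {w. length w = k \<and> set w \<subseteq> S \<and> successively X w}"

definition walk_count :: "('a \<Rightarrow> 'a \<Rightarrow> bool) \<Rightarrow> 'a set \<Rightarrow> nat \<Rightarrow> 'a \<Rightarrow> nat" where
  "walk_count X S k v = card {w. length w = k \<and> set w \<subseteq> S \<and> successively X (v # w)}"

lemma walks_eq_walks_in: "walks n X l = walks_in X {0..<n} l"
  by (simp add: walks_def walks_in_def)

lemma D_of_eq_walks_in: "C \<subseteq> {0..<n} \<Longrightarrow> D_of n X l C = walks_in X C l"
  unfolding D_of_def walks_def walks_in_def by auto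

lemma finite_lists_length_subset: "finite S \<Longrightarrow> finite {w. length w = k \<and> set w \<subseteq> S \<and> P w}"
  by (rule finite_subset[OF _ finite_lists_length_eq[of S k]]) auto

lemma walk_count_0 [simp]: "walk_count X S 0 v = 1"
proof -
  have "{w. length w = 0 \<and> set w \<subseteq> S \<and> successively X (v # w)} = {[]}" by auto
  then show ?thesis by (simp add: walk_count_def)
qed

lemma walk_count_Suc:
  assumes "finite S"
  shows "walk_count X S (Suc k) v = (\<Sum>u\<in>{u\<in>S. X v u}. walk_count X S k u)"
proof -
  let ?ext = "\<lambda>u. {w. length w = k \<and> set w \<subseteq> S \<and> successively X (u # w)}"
  have "{w. length w = Suc k \<and> set w \<subseteq> S \<and> successively X (v # w)} = (\<Union>u\<in>{u\<in>S. X v u}. Cons u ` ?ext u)"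
    by (auto simp: length_Suc_conv)
  then have "walk_count X S (Suc k) v = card (\<Union>u\<in>{u\<in>S. X v u}. Cons u ` ?ext u)"
    by (simp add: walk_count_def)
  also have "\<dots> = (\<Sum>u\<in>{u\<in>S. X v u}. card (Cons u ` ?ext u))"
    by (rule card_UN_disjoint) (auto intro!: finite_lists_length_subset assms)
  also have "\<dots> = (\<Sum>u\<in>{u\<in>S. X v u}. walk_count X S k u)"
    unfolding walk_count_def by (intro sum.cong refl card_image) auto
  finally show ?thesis .
qed

lemma card_walks_in_0 [simp]: "card (walks_in X S 0) = 1"
proof -
  have "walks_in X S 0 = {[]}" by (auto simp: walks_in_def)
  then show ?thesis by simp
qed

lemma card_walks_in_Suc:
  assumes "finite S"
  shows "card (walks_in X S (Suc k)) = (\<Sum>v\<in>S. walk_count X S k v)"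
proof -
  let ?ext = "\<lambda>v. {w. length w = k \<and> set w \<subseteq> S \<and> successively X (v # w)}"
  have "walks_in X S (Suc k) = (\<Union>v\<in>S. Cons v ` ?ext v)"
    by (auto simp: walks_in_def length_Suc_conv)
  then have "card (walks_in X S (Suc k)) = card (\<Union>v\<in>S. Cons v ` ?ext v)"
    by simp
  also have "\<dots> = (\<Sum>v\<in>S. card (Cons v ` ?ext v))"
    by (rule card_UN_disjoint) (auto intro!: finite_lists_length_subset assms)
  also have "\<dots> = (\<Sum>v\<in>S. walk_count X S k v)"
    unfolding walk_count_def by (intro sum.cong refl card_image) auto
  finally show ?thesis .
qed

lemma walk_count_regular:
  assumes "regular n X d" "v < n"
  shows "walk_count X {0..<n} k v = d ^ k"
  using assms(2)
proof (induction k arbitrary: v)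
  case (Suc k)
  have "{u\<in>{0..<n}. X v u} = {u. u < n \<and> X v u}" by auto
  then show ?case
    using assms(1) Suc by (simp add: walk_count_Suc regular_def)
qed simp

lemma card_walks_Suc:
  assumes "regular n X d"
  shows "card (walks n X (Suc k)) = n * d ^ k"
  using walk_count_regular[OF assms] by (simp add: walks_eq_walks_in card_walks_in_Suc)

locale finite_symmetric_graph =
  fixes S :: "'a set" and X :: "'a \<Rightarrow> 'a \<Rightarrow> bool"
  assumes finite_vertices: "finite S" and sym: "X u v \<Longrightarrow> X v u"
begin

definition degree :: "'a \<Rightarrow> nat" where
  "degree v = card {u\<in>S. X v u}"

definition non_isolated :: "'a set" where
  "non_isolated = {v\<in>S. degree v > 0}"

definition edge_sum :: nat where
  "edge_sum = (\<Sum>v\<in>S. degree v)"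

lemma finite_non_isolated: "finite non_isolated"
  using finite_vertices by (simp add: non_isolated_def)

lemma degree_pos: "v \<in> non_isolated \<Longrightarrow> degree v > 0"
  by (simp add: non_isolated_def)

lemma neighbours_non_isolated:
  assumes "v \<in> non_isolated"
  shows "{u\<in>S. X v u} = {u\<in>non_isolated. X v u}"
proof -
  have "degree u > 0" if "u \<in> S" "X v u" for u
  proof -
    have "v \<in> {w\<in>S. X u w}" using assms that sym by (auto simp: non_isolated_def)
    then show ?thesis using finite_vertices by (auto simp: degree_def card_gt_0_iff)
  qed
  then show ?thesis by (auto simp: non_isolated_def)
qed

lemma walk_count_Suc_isolated:
  assumes "v \<in> S - non_isolated"
  shows "walk_count X S (Suc k) v = 0"
proof -
  have "{u\<in>S. X v u} = {}"
    using assms finite_vertices by (auto simp: non_isolated_def degree_def card_gt_0_iff)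
  then show ?thesis unfolding walk_count_Suc[OF finite_vertices] by (simp only: sum.empty)
qed

lemma walk_count_pos: "v \<in> non_isolated \<Longrightarrow> walk_count X S k v > 0"
proof (induction k arbitrary: v)
  case (Suc k)
  obtain u where u: "u \<in> S" "X v u"
    using Suc.prems by (auto simp: non_isolated_def degree_def card_gt_0_iff)
  then have "u \<in> non_isolated" using neighbours_non_isolated[OF Suc.prems] by auto
  then have "0 < walk_count X S k u" by (rule Suc.IH)
  also have "\<dots> \<le> (\<Sum>u\<in>{u\<in>S. X v u}. walk_count X S k u)"
    using u finite_vertices by (intro member_le_sum) auto
  finally show ?case by (simp add: walk_count_Suc[OF finite_vertices])
qed simp

lemma sum_over_neighbours:
  "(\<Sum>v\<in>non_isolated. \<Sum>u\<in>{u\<in>non_isolated. X v u}. f u)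
     = (\<Sum>u\<in>non_isolated. real (degree u) * f u)"
proof -
  have "(\<Sum>v\<in>non_isolated. \<Sum>u\<in>{u\<in>non_isolated. X v u}. f u)
      = (\<Sum>v\<in>non_isolated. \<Sum>u\<in>non_isolated. if X v u then f u else 0)"
    by (simp only: sum.inter_filter[OF finite_non_isolated])
  also have "\<dots> = (\<Sum>u\<in>non_isolated. \<Sum>v\<in>non_isolated. if X v u then f u else 0)"
    by (rule sum.swap)
  also have "\<dots> = (\<Sum>u\<in>non_isolated. \<Sum>v\<in>{v\<in>non_isolated. X v u}. f u)"
    by (simp only: sum.inter_filter[OF finite_non_isolated])
  also have "\<dots> = (\<Sum>u\<in>non_isolated. real (degree u) * f u)"
  proof (intro sum.cong refl)
    fix u assume "u \<in> non_isolated"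
    then have "{v\<in>non_isolated. X v u} = {v\<in>S. X u v}"
      using neighbours_non_isolated sym by blast
    then show "(\<Sum>v\<in>{v\<in>non_isolated. X v u}. f u) = real (degree u) * f u"
      by (simp add: degree_def)
  qed
  finally show ?thesis .
qed

lemma edge_sum_non_isolated: "edge_sum = (\<Sum>v\<in>non_isolated. degree v)"
  unfolding edge_sum_def using finite_vertices
  by (intro sum.mono_neutral_right) (auto simp: non_isolated_def)

lemma sum_degree_weights: "edge_sum > 0 \<Longrightarrow> (\<Sum>v\<in>non_isolated. degree v / edge_sum) = 1"
  unfolding sum_divide_distrib[symmetric] of_nat_sum[symmetric] edge_sum_non_isolated[symmetric]
  by simp

lemma non_isolated_nonempty: "edge_sum > 0 \<Longrightarrow> non_isolated \<noteq> {}"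
  using edge_sum_non_isolated by auto

lemma card_vertices_pos: "edge_sum > 0 \<Longrightarrow> card S > 0"
  using finite_vertices by (auto simp: edge_sum_def card_gt_0_iff)

lemma sum_ln_walk_count_le:
  assumes v: "v \<in> non_isolated"
  shows "(\<Sum>u\<in>{u\<in>non_isolated. X v u}. ln (walk_count X S k u))
           \<le> degree v * ln (walk_count X S (Suc k) v / degree v)"
proof -
  let ?N = "{u\<in>non_isolated. X v u}"
  have card_N: "card ?N = degree v"
    using neighbours_non_isolated[OF v] by (simp add: degree_def)
  then have "?N \<noteq> {}" using degree_pos[OF v] by (intro notI) simp
  have "(\<Sum>u\<in>?N. ln (walk_count X S k u)) = degree v * (\<Sum>u\<in>?N. 1 / degree v * ln (walk_count X S k u))"
    using degree_pos[OF v] by (simp add: sum_distrib_left)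
  also have "\<dots> \<le> degree v * ln (\<Sum>u\<in>?N. 1 / degree v * walk_count X S k u)"
    using \<open>?N \<noteq> {}\<close> card_N degree_pos[OF v] walk_count_pos finite_non_isolated
    by (intro mult_left_mono sum_weighted_ln_le_ln_sum) auto
  also have "(\<Sum>u\<in>?N. 1 / degree v * walk_count X S k u) = walk_count X S (Suc k) v / degree v"
    using neighbours_non_isolated[OF v]
    by (simp add: walk_count_Suc[OF finite_vertices] sum_divide_distrib)
  finally show ?thesis .
qed

lemma degree_entropy_le_walk_entropy:
  "real j * (\<Sum>v\<in>non_isolated. degree v * ln (degree v))
     \<le> (\<Sum>v\<in>non_isolated. degree v * ln (walk_count X S (Suc j) v / degree v))"
proof (induction j)
  case 0
  have "walk_count X S (Suc 0) v = degree v" for v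
    by (simp add: walk_count_Suc[OF finite_vertices] degree_def)
  then show ?case by (auto intro!: sum_nonneg dest: degree_pos)
next
  case (Suc j)
  have split_ln: "degree u * ln (walk_count X S (Suc j) u)
      = degree u * ln (walk_count X S (Suc j) u / degree u) + degree u * ln (degree u)"
    if "u \<in> non_isolated" for u
    using walk_count_pos[OF that] degree_pos[OF that] by (simp add: ln_div algebra_simps)
  have "real (Suc j) * (\<Sum>v\<in>non_isolated. degree v * ln (degree v))
      \<le> (\<Sum>u\<in>non_isolated. degree u * ln (walk_count X S (Suc j) u / degree u))
         + (\<Sum>u\<in>non_isolated. degree u * ln (degree u))"
    using Suc.IH by (simp add: algebra_simps)
  also have "\<dots> = (\<Sum>u\<in>non_isolated. degree u * ln (walk_count X S (Suc j) u))"
    by (simp add: split_ln sum.distrib)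
  also have "\<dots> = (\<Sum>v\<in>non_isolated. \<Sum>u\<in>{u\<in>non_isolated. X v u}. ln (walk_count X S (Suc j) u))"
    by (rule sum_over_neighbours[symmetric])
  also have "\<dots> \<le> (\<Sum>v\<in>non_isolated. degree v * ln (walk_count X S (Suc (Suc j)) v / degree v))"
    by (intro sum_mono sum_ln_walk_count_le)
  finally show ?case .
qed

lemma edge_entropy_le_degree_entropy:
  assumes E: "edge_sum > 0"
  shows "edge_sum * ln (edge_sum / card S) \<le> (\<Sum>v\<in>non_isolated. degree v * ln (degree v))"
proof -
  have "- (\<Sum>v\<in>non_isolated. degree v * ln (degree v)) / edge_sum
      = (\<Sum>v\<in>non_isolated. degree v / edge_sum * ln (1 / degree v))"
    using degree_pos by (simp add: ln_div sum_divide_distrib sum_negf)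
  also have "\<dots> \<le> ln (\<Sum>v\<in>non_isolated. degree v / edge_sum * (1 / degree v))"
    using degree_pos finite_non_isolated non_isolated_nonempty[OF E] sum_degree_weights[OF E]
    by (intro sum_weighted_ln_le_ln_sum) auto
  also have "(\<Sum>v\<in>non_isolated. degree v / edge_sum * (1 / degree v)) = card non_isolated / edge_sum"
    using degree_pos by simp
  also have "ln (card non_isolated / edge_sum) \<le> ln (card S / edge_sum)"
  proof -
    have "card non_isolated \<le> card S"
      using finite_vertices by (intro card_mono) (auto simp: non_isolated_def)
    moreover have "card non_isolated > 0"
      using finite_non_isolated non_isolated_nonempty[OF E] by (simp add: card_gt_0_iff)
    ultimately show ?thesis
      using E by (simp add: divide_right_mono)
  qed
  also have "\<dots> = - ln (edge_sum / card S)"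
    using E card_vertices_pos[OF E] by (simp add: ln_div)
  finally show ?thesis
    using E by (simp add: field_simps)
qed

lemma blakley_roy:
  "card S * (edge_sum / card S) ^ k \<le> real (\<Sum>v\<in>S. walk_count X S k v)"
proof (cases k)
  case (Suc j)
  show ?thesis
  proof (cases "edge_sum = 0")
    case False
    then have E: "edge_sum > 0" by simp
    have walks_non_isolated: "(\<Sum>v\<in>S. walk_count X S k v) = (\<Sum>v\<in>non_isolated. walk_count X S k v)"
      using finite_vertices walk_count_Suc_isolated Suc
      by (intro sum.mono_neutral_right) (auto simp: non_isolated_def)
    have "edge_sum * ln (edge_sum / card S) * j \<le> (\<Sum>v\<in>non_isolated. degree v * ln (degree v)) * j"
      by (intro mult_right_mono edge_entropy_le_degree_entropy E) simp
    also have "\<dots> \<le> (\<Sum>v\<in>non_isolated. degree v * ln (walk_count X S k v / degree v))"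
      using degree_entropy_le_walk_entropy[of j] Suc by (simp add: mult.commute)
    also have "\<dots> = edge_sum * (\<Sum>v\<in>non_isolated. degree v / edge_sum * ln (walk_count X S k v / degree v))"
      using E by (simp add: sum_distrib_left)
    also have "(\<Sum>v\<in>non_isolated. degree v / edge_sum * ln (walk_count X S k v / degree v))
        \<le> ln (\<Sum>v\<in>non_isolated. degree v / edge_sum * (walk_count X S k v / degree v))"
      using finite_non_isolated non_isolated_nonempty[OF E] sum_degree_weights[OF E]
        degree_pos walk_count_pos
      by (intro sum_weighted_ln_le_ln_sum) auto
    also have "(\<Sum>v\<in>non_isolated. degree v / edge_sum * (walk_count X S k v / degree v))
        = (\<Sum>v\<in>S. walk_count X S k v) / edge_sum"
      using degree_pos by (simp add: walks_non_isolated sum_divide_distrib)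
    finally have "ln ((edge_sum / card S) ^ j) \<le> ln ((\<Sum>v\<in>S. walk_count X S k v) / edge_sum)"
      using E by (simp add: ln_realpow mult.commute)
    moreover have "0 < (\<Sum>v\<in>non_isolated. real (walk_count X S k v))"
      using finite_non_isolated non_isolated_nonempty[OF E] walk_count_pos by (intro sum_pos) auto
    ultimately have "(edge_sum / card S) ^ j \<le> (\<Sum>v\<in>S. walk_count X S k v) / edge_sum"
      using E card_vertices_pos[OF E] walks_non_isolated by (subst (asm) ln_le_cancel_iff) auto
    then show ?thesis
      using E card_vertices_pos[OF E] Suc by (simp add: field_simps)
  qed (simp add: Suc sum_nonneg)
qed simp

end

section \<open>The spectral bound and the expander mixing lemma\<close>

text \<open>Vectors of \<open>\<real>\<^sup>n\<close> are functions \<open>nat \<Rightarrow> real\<close>, of which only the values below \<open>n\<close> matter.\<close>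
definition adj_form :: "nat \<Rightarrow> (nat \<Rightarrow> nat \<Rightarrow> bool) \<Rightarrow> (nat \<Rightarrow> real) \<Rightarrow> (nat \<Rightarrow> real) \<Rightarrow> real" where
  "adj_form n X y z = (\<Sum>i<n. \<Sum>j<n. of_bool (X i j) * y i * z j)"

definition adj_mult :: "nat \<Rightarrow> (nat \<Rightarrow> nat \<Rightarrow> bool) \<Rightarrow> (nat \<Rightarrow> real) \<Rightarrow> nat \<Rightarrow> real" where
  "adj_mult n X y i = (\<Sum>j<n. of_bool (X i j) * y j)"

lemma adj_form_eq_sum: "adj_form n X y z = (\<Sum>i<n. y i * adj_mult n X z i)"
  unfolding adj_form_def adj_mult_def by (simp only: sum_distrib_left mult_ac)

lemma adj_form_commute:
  assumes "\<And>i j. X i j \<Longrightarrow> X j i"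
  shows "adj_form n X y z = adj_form n X z y"
proof -
  have "of_bool (X i j) = (of_bool (X j i) :: real)" for i j
    using assms by auto
  then show ?thesis
    unfolding adj_form_def by (subst sum.swap) (simp add: mult.commute mult.left_commute)
qed

lemma adj_form_add_scaled:
  "adj_form n X (\<lambda>i. y i + t * z i) (\<lambda>i. y i + t * z i)
     = adj_form n X y y + t * (adj_form n X y z + adj_form n X z y) + t\<^sup>2 * adj_form n X z z"
  unfolding adj_form_def by (simp add: algebra_simps power2_eq_square sum.distrib sum_distrib_left)

lemma adj_form_scale: "adj_form n X (\<lambda>i. c * y i) (\<lambda>i. c * y i) = c\<^sup>2 * adj_form n X y y"
  unfolding adj_form_def by (simp add: sum_distrib_left algebra_simps power2_eq_square)

lemma adj_form_cong: "(\<And>i. i < n \<Longrightarrow> y i = y' i) \<Longrightarrow> adj_form n X y y = adj_form n X y' y'"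
  unfolding adj_form_def by (intro sum.cong refl) auto

lemma sum_sq_add_scaled:
  fixes y z :: "nat \<Rightarrow> real"
  shows "(\<Sum>i<n. (y i + t * z i)\<^sup>2)
           = (\<Sum>i<n. (y i)\<^sup>2) + t * (2 * (\<Sum>i<n. y i * z i)) + t\<^sup>2 * (\<Sum>i<n. (z i)\<^sup>2)"
  by (simp add: algebra_simps power2_eq_square sum.distrib sum_distrib_left)

lemma regular_sum_row:
  assumes "regular n X d" "i < n"
  shows "(\<Sum>j<n. of_bool (X i j)) = real d"
proof -
  have "{..<n} \<inter> {j. X i j} = {u. u < n \<and> X i u}" by auto
  then show ?thesis using assms by (simp add: sum_of_bool_eq regular_def)
qed

lemma regular_sum_column:
  assumes "regular n X d" "\<And>i j. X i j \<Longrightarrow> X j i" "j < n"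
  shows "(\<Sum>i<n. of_bool (X i j)) = real d"
proof -
  have "(\<Sum>i<n. of_bool (X i j)) = (\<Sum>i<n. of_bool (X j i) :: real)"
    using assms(2) by (intro sum.cong refl) auto
  then show ?thesis using regular_sum_row[OF assms(1,3)] by simp
qed

lemma compact_unit_sphere_sum_zero:
  "compact {y :: nat \<Rightarrow> real. y \<in> Pi UNIV (\<lambda>i. if i < n then {-1..1} else {0})
      \<and> (\<Sum>i<n. (y i)\<^sup>2) = 1 \<and> (\<Sum>i<n. y i) = 0}"
proof -
  have "compactin (product_topology (\<lambda>i. euclidean) UNIV)
      (PiE UNIV (\<lambda>i. if i < n then {-1..(1::real)} else {0}))"
    by (subst compactin_PiE) auto
  then have "compact (Pi UNIV (\<lambda>i. if i < n then {-1..(1::real)} else {0}))"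
    by (simp add: euclidean_product_topology PiE_UNIV_domain)
  moreover have "closed {y :: nat \<Rightarrow> real. (\<Sum>i<n. (y i)\<^sup>2) = 1 \<and> (\<Sum>i<n. y i) = 0}"
    by (simp only: Collect_conj_eq)
       (intro closed_Int closed_Collect_eq continuous_intros continuous_on_product_coordinates)
  ultimately show ?thesis
    by (simp only: Collect_conj_eq Collect_mem_eq Int_assoc compact_Int_closed)
qed

lemma adj_form_attains_min_on_sphere:
  assumes "2 \<le> n"
  obtains y0 where "(\<Sum>i<n. y0 i) = 0" "(\<Sum>i<n. (y0 i)\<^sup>2) = 1"
    and "\<And>y. (\<Sum>i<n. y i) = 0 \<Longrightarrow> (\<Sum>i<n. (y i)\<^sup>2) = 1 \<Longrightarrow> adj_form n X y0 y0 \<le> adj_form n X y y"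
proof -
  define K where "K = {y :: nat \<Rightarrow> real. y \<in> Pi UNIV (\<lambda>i. if i < n then {-1..1} else {0})
      \<and> (\<Sum>i<n. (y i)\<^sup>2) = 1 \<and> (\<Sum>i<n. y i) = 0}"
  have truncate_in_K: "(\<lambda>i. if i < n then y i else 0) \<in> K"
    if "(\<Sum>i<n. y i) = 0" "(\<Sum>i<n. (y i)\<^sup>2) = 1" for y
  proof -
    have "(y i)\<^sup>2 \<le> 1\<^sup>2" if "i < n" for i
      using member_le_sum[of i "{..<n}" "\<lambda>i. (y i)\<^sup>2"] \<open>i < n\<close> \<open>(\<Sum>i<n. (y i)\<^sup>2) = 1\<close> by simp
    then have "\<bar>y i\<bar> \<le> 1" if "i < n" for i
      using that abs_le_square_iff[of "y i" 1] by simp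
    then show ?thesis using that by (auto simp: K_def abs_le_iff)
  qed
  define e :: "nat \<Rightarrow> real" where "e i = (if i = 0 then 1 / sqrt 2 else if i = 1 then - 1 / sqrt 2 else 0)" for i
  have "(\<Sum>i<n. f i) = f 0 + f 1" if "\<And>i. i \<ge> 2 \<Longrightarrow> f i = 0" for f :: "nat \<Rightarrow> real"
    using assms that sum.mono_neutral_right[of "{..<n}" "{0, 1}" f] by auto
  then have "(\<Sum>i<n. e i) = 0" "(\<Sum>i<n. (e i)\<^sup>2) = 1"
    by (simp_all add: e_def power_divide)
  then have "K \<noteq> {}" using truncate_in_K by blast
  moreover have "continuous_on K (\<lambda>y. adj_form n X y y)"
    unfolding adj_form_def
    by (intro continuous_intros continuous_on_subset[OF continuous_on_product_coordinates subset_UNIV])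
  ultimately obtain y0 where y0: "y0 \<in> K" and min: "\<And>y. y \<in> K \<Longrightarrow> adj_form n X y0 y0 \<le> adj_form n X y y"
    using continuous_attains_inf[OF compact_unit_sphere_sum_zero[of n, folded K_def]] by blast
  show ?thesis
  proof (rule that)
    show "(\<Sum>i<n. y0 i) = 0" "(\<Sum>i<n. (y0 i)\<^sup>2) = 1" using y0 by (auto simp: K_def)
    fix y :: "nat \<Rightarrow> real" assume "(\<Sum>i<n. y i) = 0" "(\<Sum>i<n. (y i)\<^sup>2) = 1"
    then have "adj_form n X y0 y0 \<le> adj_form n X (\<lambda>i. if i < n then y i else 0) (\<lambda>i. if i < n then y i else 0)"
      by (intro min truncate_in_K)
    also have "\<dots> = adj_form n X y y" by (rule adj_form_cong) simp
    finally show "adj_form n X y0 y0 \<le> adj_form n X y y" .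
  qed
qed

lemma adj_form_rayleigh_min:
  assumes "2 \<le> n"
  obtains y0 where "(\<Sum>i<n. y0 i) = 0" "(\<Sum>i<n. (y0 i)\<^sup>2) = 1"
    and "\<And>y. (\<Sum>i<n. y i) = 0 \<Longrightarrow> adj_form n X y0 y0 * (\<Sum>i<n. (y i)\<^sup>2) \<le> adj_form n X y y"
proof -
  obtain y0 where y0: "(\<Sum>i<n. y0 i) = 0" "(\<Sum>i<n. (y0 i)\<^sup>2) = 1"
    and min: "\<And>y. (\<Sum>i<n. y i) = 0 \<Longrightarrow> (\<Sum>i<n. (y i)\<^sup>2) = 1 \<Longrightarrow> adj_form n X y0 y0 \<le> adj_form n X y y"
    using adj_form_attains_min_on_sphere[OF assms] by blast
  have "adj_form n X y0 y0 * (\<Sum>i<n. (y i)\<^sup>2) \<le> adj_form n X y y" if y: "(\<Sum>i<n. y i) = 0" for y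
  proof (cases "(\<Sum>i<n. (y i)\<^sup>2) = 0")
    case True
    then have "adj_form n X y y = adj_form n X (\<lambda>_. 0) (\<lambda>_. 0)"
      by (intro adj_form_cong) (simp add: sum_nonneg_eq_0_iff)
    then show ?thesis using True by (simp add: adj_form_def)
  next
    case False
    define q where "q = (\<Sum>i<n. (y i)\<^sup>2)"
    have q: "q > 0" using False by (simp add: q_def sum_nonneg order_le_neq_trans)
    have "(\<Sum>i<n. (y i / sqrt q)\<^sup>2) = 1" "(\<Sum>i<n. y i / sqrt q) = 0"
      using q y by (simp_all add: power_divide q_def sum_divide_distrib[symmetric])
    then have "adj_form n X y0 y0 \<le> adj_form n X (\<lambda>i. (1 / sqrt q) * y i) (\<lambda>i. (1 / sqrt q) * y i)"
      by (intro min) simp_all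
    also have "\<dots> = adj_form n X y y / q"
      unfolding adj_form_scale using q by (simp add: power_divide)
    finally show ?thesis using q by (simp add: q_def field_simps)
  qed
  then show ?thesis using that y0 by blast
qed

lemma linear_coeff_eq_0_if_nonneg:
  fixes a b :: real
  assumes "\<And>t. a * t + b * t\<^sup>2 \<ge> 0"
  shows "a = 0"
proof (rule ccontr)
  assume "a \<noteq> 0"
  define c where "c = \<bar>b\<bar> + 1"
  have c: "c > 0" "b \<le> c" by (auto simp: c_def)
  define t where "t = - a / (2 * c)"
  have "a * t + b * t\<^sup>2 = - a\<^sup>2 / (2 * c) + b * a\<^sup>2 / (4 * c\<^sup>2)"
    unfolding t_def using c by (simp add: power2_eq_square field_simps)
  also have "b * a\<^sup>2 / (4 * c\<^sup>2) \<le> c * a\<^sup>2 / (4 * c\<^sup>2)"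
    using c by (intro divide_right_mono mult_right_mono) auto
  also have "- a\<^sup>2 / (2 * c) + c * a\<^sup>2 / (4 * c\<^sup>2) = - a\<^sup>2 / (4 * c)"
    using c by (simp add: power2_eq_square field_simps)
  also have "\<dots> < 0" using \<open>a \<noteq> 0\<close> c by simp
  finally show False using assms[of t] by simp
qed

text \<open>First-order optimality of the Rayleigh minimiser \<open>y0\<close>: along \<open>y0 + t z\<close> the Rayleigh
  inequality is a quadratic in \<open>t\<close> that is nonnegative and vanishes at \<open>t = 0\<close>.\<close>
lemma rayleigh_min_residual_orthogonal:
  assumes sym: "\<And>i j. X i j \<Longrightarrow> X j i"
    and y0: "(\<Sum>i<n. y0 i) = 0" "(\<Sum>i<n. (y0 i)\<^sup>2) = 1"
    and min: "\<And>y. (\<Sum>i<n. y i) = 0 \<Longrightarrow> adj_form n X y0 y0 * (\<Sum>i<n. (y i)\<^sup>2) \<le> adj_form n X y y"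
    and z: "(\<Sum>i<n. z i) = 0"
  shows "(\<Sum>i<n. z i * (adj_mult n X y0 i - adj_form n X y0 y0 * y0 i)) = 0"
proof -
  define m where "m = adj_form n X y0 y0"
  define r where "r = (\<Sum>i<n. z i * (adj_mult n X y0 i - m * y0 i))"
  define s where "s = (\<Sum>i<n. y0 i * z i)"
  have "0 \<le> 2 * r * t + (adj_form n X z z - m * (\<Sum>i<n. (z i)\<^sup>2)) * t\<^sup>2" for t
  proof -
    have "(\<Sum>i<n. y0 i + t * z i) = 0"
      using y0 z by (simp add: sum.distrib sum_distrib_left[symmetric])
    then have "m * (\<Sum>i<n. (y0 i + t * z i)\<^sup>2) \<le> adj_form n X (\<lambda>i. y0 i + t * z i) (\<lambda>i. y0 i + t * z i)"
      unfolding m_def by (rule min)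
    then have "m * (1 + t * (2 * s) + t\<^sup>2 * (\<Sum>i<n. (z i)\<^sup>2))
        \<le> m + t * (2 * adj_form n X z y0) + t\<^sup>2 * adj_form n X z z"
      by (simp add: adj_form_add_scaled sum_sq_add_scaled adj_form_commute[OF sym, where y = y0 and z = z]
          y0 m_def s_def)
    moreover have "adj_form n X z y0 = r + m * s"
      by (simp add: adj_form_eq_sum r_def s_def algebra_simps sum_subtractf sum_distrib_left)
    ultimately show ?thesis by (simp add: algebra_simps)
  qed
  then have "2 * r = 0" by (rule linear_coeff_eq_0_if_nonneg)
  then show ?thesis by (simp add: r_def m_def)
qed

lemma rayleigh_min_eigenvector:
  fixes c :: real
  assumes sym: "\<And>i j. X i j \<Longrightarrow> X j i"
    and column: "\<And>j. j < n \<Longrightarrow> (\<Sum>i<n. of_bool (X i j)) = c"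
    and y0: "(\<Sum>i<n. y0 i) = 0" "(\<Sum>i<n. (y0 i)\<^sup>2) = 1"
    and min: "\<And>y. (\<Sum>i<n. y i) = 0 \<Longrightarrow> adj_form n X y0 y0 * (\<Sum>i<n. (y i)\<^sup>2) \<le> adj_form n X y y"
    and i: "i < n"
  shows "adj_mult n X y0 i = adj_form n X y0 y0 * y0 i"
proof -
  define r where "r i = adj_mult n X y0 i - adj_form n X y0 y0 * y0 i" for i
  \<comment> \<open>Constant column sums make \<open>A\<close> preserve the hyperplane, so \<open>r\<close> is orthogonal to itself.\<close>
  have "(\<Sum>i<n. adj_mult n X y0 i) = (\<Sum>j<n. y0 j * (\<Sum>i<n. of_bool (X i j)))"
    unfolding adj_mult_def by (subst sum.swap) (simp add: sum_distrib_left mult.commute)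
  also have "\<dots> = (\<Sum>j<n. y0 j * c)"
    by (intro sum.cong refl) (metis column lessThan_iff)
  also have "\<dots> = 0"
    using y0(1) by (simp add: sum_distrib_right[symmetric])
  finally have "(\<Sum>i<n. r i) = 0"
    using y0(1) by (simp add: r_def sum_subtractf sum_distrib_left[symmetric])
  then have "(\<Sum>i<n. r i * r i) = 0"
    using rayleigh_min_residual_orthogonal[OF sym y0 min] unfolding r_def by blast
  then have "r i = 0"
    using i by (simp add: sum_nonneg_eq_0_iff)
  then show ?thesis by (simp add: r_def)
qed

lemma eigenvalue_adj_matI:
  assumes "(\<Sum>i<n. (y i)\<^sup>2) \<noteq> 0" and "\<And>i. i < n \<Longrightarrow> adj_mult n X y i = m * y i"
  shows "eigenvalue (adj_mat n X) m"
proof -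
  have "vec n y \<noteq> 0\<^sub>v n"
  proof
    assume "vec n y = 0\<^sub>v n"
    then have "y i = 0" if "i < n" for i using that by (metis index_vec index_zero_vec(1))
    then show False using assms(1) by simp
  qed
  moreover have "(adj_mat n X *\<^sub>v vec n y) $ i = adj_mult n X y i" if "i < n" for i
    using that unfolding adj_mat_def adj_mult_def
    by (simp add: scalar_prod_def lessThan_atLeast0 row_def of_bool_def)
  then have "adj_mat n X *\<^sub>v vec n y = m \<cdot>\<^sub>v vec n y"
    using assms(2) by (intro eq_vecI) (simp_all add: adj_mat_def)
  ultimately show ?thesis
    unfolding eigenvalue_def eigenvector_def by (intro exI[of _ "vec n y"]) (simp add: adj_mat_def)
qed

lemma rayleigh_min_nonpos:
  assumes "\<And>i. \<not> X i i" "2 \<le> n"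
    and min: "\<And>y. (\<Sum>i<n. y i) = 0 \<Longrightarrow> m * (\<Sum>i<n. (y i)\<^sup>2) \<le> adj_form n X y y"
  shows "m \<le> 0"
proof -
  define z :: "nat \<Rightarrow> real" where "z i = (if i = 0 then 1 else if i = 1 then - 1 else 0)" for i
  have sum01: "(\<Sum>i<n. f i) = f 0 + f 1" if "\<And>i. i \<ge> 2 \<Longrightarrow> f i = 0" for f :: "nat \<Rightarrow> real"
    using assms(2) that sum.mono_neutral_right[of "{..<n}" "{0, 1}" f] by auto
  have "(\<Sum>i<n. z i) = 0" "(\<Sum>i<n. (z i)\<^sup>2) = 2"
    by (subst sum01; simp add: z_def)+
  then have "m * 2 \<le> adj_form n X z z"
    using min[of z] by simp
  also have "adj_form n X z z = z 0 * adj_mult n X z 0 + z 1 * adj_mult n X z 1"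
    unfolding adj_form_eq_sum by (rule sum01) (simp add: z_def)
  also have "\<dots> = - of_bool (X 0 1) - of_bool (X 1 0)"
    unfolding adj_mult_def by (subst (1 2) sum01) (simp_all add: z_def assms(1))
  also have "\<dots> \<le> 0" by simp
  finally show ?thesis by simp
qed

lemma expander_two_le_card:
  assumes "expander n X d lam" "0 < d" "0 < n"
  shows "2 \<le> n"
proof -
  have "card {u. u < n \<and> X 0 u} > 0"
    using assms by (simp add: expander_def regular_def)
  then obtain u where "u < n" "X 0 u"
    by (metis (no_types, lifting) Collect_empty_eq card.empty less_irrefl)
  moreover have "u \<noteq> 0"
    using assms(1) \<open>X 0 u\<close> by (auto simp: expander_def simple_graph_def)
  ultimately show ?thesis by linarith
qed

text \<open>The minimiser of the Rayleigh quotient on the hyperplane orthogonal to the all-ones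
  vector is an eigenvector whose eigenvalue is \<open>\<le> 0 < d\<close>, hence bounded in absolute value
  by \<open>lam\<close>.\<close>
lemma expander_adj_form_ge:
  assumes X: "expander n X d lam" and "0 < d" "0 < n"
  shows "0 \<le> lam"
    and "(\<Sum>i<n. y i) = 0 \<Longrightarrow> - lam * (\<Sum>i<n. (y i)\<^sup>2) \<le> adj_form n X y y"
proof -
  have sym: "\<And>i j. X i j \<Longrightarrow> X j i" and irrefl: "\<And>i. \<not> X i i" and reg: "regular n X d"
    using X by (auto simp: expander_def simple_graph_def)
  have n: "2 \<le> n" using expander_two_le_card[OF assms] .
  obtain y0 where y0: "(\<Sum>i<n. y0 i) = 0" "(\<Sum>i<n. (y0 i)\<^sup>2) = 1"
    and min: "\<And>y. (\<Sum>i<n. y i) = 0 \<Longrightarrow> adj_form n X y0 y0 * (\<Sum>i<n. (y i)\<^sup>2) \<le> adj_form n X y y"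
    using adj_form_rayleigh_min[OF n] by blast
  have "eigenvalue (adj_mat n X) (adj_form n X y0 y0)"
  proof (rule eigenvalue_adj_matI)
    show "(\<Sum>i<n. (y0 i)\<^sup>2) \<noteq> 0" using y0 by simp
    show "adj_mult n X y0 i = adj_form n X y0 y0 * y0 i" if "i < n" for i
      by (rule rayleigh_min_eigenvector[OF sym regular_sum_column[OF reg sym] y0 min that])
  qed
  moreover have "adj_form n X y0 y0 \<le> 0"
    using irrefl n min by (rule rayleigh_min_nonpos)
  ultimately have bound: "\<bar>adj_form n X y0 y0\<bar> \<le> lam"
    using X \<open>0 < d\<close> by (auto simp: expander_def)
  then show "0 \<le> lam" by simp
  assume "(\<Sum>i<n. y i) = 0"
  then have "adj_form n X y0 y0 * (\<Sum>i<n. (y i)\<^sup>2) \<le> adj_form n X y y" by (rule min)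
  moreover have "- lam * (\<Sum>i<n. (y i)\<^sup>2) \<le> adj_form n X y0 y0 * (\<Sum>i<n. (y i)\<^sup>2)"
    using bound by (intro mult_right_mono) (auto intro: sum_nonneg)
  ultimately show "- lam * (\<Sum>i<n. (y i)\<^sup>2) \<le> adj_form n X y y" by linarith
qed

lemma adj_form_indicator:
  assumes "S \<subseteq> {..<n}" "\<And>i j. X i j \<Longrightarrow> X j i"
  shows "adj_form n X (indicator S) (indicator S) = real (\<Sum>v\<in>S. card {u\<in>S. X v u})"
proof -
  have fin: "finite S" using assms(1) finite_subset by blast
  have restrict: "(\<Sum>i<n. indicator S i * f i) = sum f S" for f :: "nat \<Rightarrow> real"
    using assms(1) by (simp add: indicator_def sum_of_bool_mult_eq Int_absorb1)
  have "adj_form n X (indicator S) (indicator S) = (\<Sum>i\<in>S. \<Sum>j\<in>S. of_bool (X i j))"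
    unfolding adj_form_eq_sum adj_mult_def by (simp add: restrict mult.commute[of "of_bool _"])
  also have "\<dots> = (\<Sum>i\<in>S. real (card {j\<in>S. X i j}))"
    using fin by (simp add: sum_of_bool_eq Int_def)
  finally show ?thesis by simp
qed

lemma adj_form_one:
  assumes "regular n X d"
  shows "adj_form n X y (\<lambda>_. 1) = real d * (\<Sum>i<n. y i)"
  unfolding adj_form_eq_sum adj_mult_def
  using regular_sum_row[OF assms] by (simp add: sum_distrib_left mult.commute)

text \<open>The spectral bound applied to \<open>1\<^sub>S - \<mu> 1\<close>, which sums to zero.\<close>
lemma expander_mixing:
  assumes X: "expander n X d lam" and "0 < d" "0 < n" and S: "S \<subseteq> {0..<n}"
  defines "\<mu> \<equiv> real (card S) / real n"
  shows "\<mu> * d * card S - lam * card S * (1 - \<mu>) \<le> real (\<Sum>v\<in>S. card {u\<in>S. X v u})"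
proof -
  have sym: "\<And>i j. X i j \<Longrightarrow> X j i" and reg: "regular n X d"
    using X by (auto simp: expander_def simple_graph_def)
  have S': "S \<subseteq> {..<n}" using S by auto
  have sum_ind: "(\<Sum>i<n. indicator S i) = real (card S)"
    by (simp add: indicator_def sum_of_bool_eq Int_absorb1[OF S'])
  have n_\<mu>: "real n * \<mu> = card S" using \<open>0 < n\<close> by (simp add: \<mu>_def)
  define y where "y i = indicator S i + (- \<mu>) * 1" for i
  have "(\<Sum>i<n. y i) = 0"
    by (simp add: y_def sum_subtractf sum_ind n_\<mu>[symmetric])
  then have "- lam * (\<Sum>i<n. (y i)\<^sup>2) \<le> adj_form n X y y"
    by (rule expander_adj_form_ge(2)[OF X \<open>0 < d\<close> \<open>0 < n\<close>])
  moreover have "adj_form n X y y = real (\<Sum>v\<in>S. card {u\<in>S. X v u}) - \<mu> * d * card S"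
  proof -
    have "adj_form n X y y = adj_form n X (indicator S) (indicator S)
        - \<mu> * (adj_form n X (indicator S) (\<lambda>_. 1) + adj_form n X (\<lambda>_. 1) (indicator S))
        + \<mu>\<^sup>2 * adj_form n X (\<lambda>_. 1) (\<lambda>_. 1)"
      unfolding y_def adj_form_add_scaled by simp
    also have "\<dots> = real (\<Sum>v\<in>S. card {u\<in>S. X v u}) - 2 * \<mu> * d * card S + \<mu> * d * (real n * \<mu>)"
      using adj_form_commute[of X n "\<lambda>_. 1" "indicator S", OF sym]
      by (simp add: adj_form_indicator[OF S' sym] adj_form_one[OF reg] sum_ind power2_eq_square)
    finally show ?thesis by (simp add: n_\<mu>)
  qed
  moreover have "(\<Sum>i<n. (y i)\<^sup>2) = card S * (1 - \<mu>)"
  proof -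
    have "(indicator S i)\<^sup>2 = (indicator S i :: real)" for i
      by (simp add: indicator_def)
    then have "(\<Sum>i<n. (indicator S i)\<^sup>2) = real (card S)"
      using sum_ind by simp
    then have "(\<Sum>i<n. (y i)\<^sup>2) = card S - 2 * \<mu> * card S + \<mu> * (real n * \<mu>)"
      unfolding y_def sum_sq_add_scaled by (simp add: sum_ind power2_eq_square)
    then show ?thesis by (simp add: n_\<mu>[symmetric] algebra_simps)
  qed
  ultimately show ?thesis by (simp add: algebra_simps)
qed

section \<open>Lifting reconfiguration sequences\<close>

lemma is_clique_subset: "is_clique V E C \<Longrightarrow> Z \<subseteq> C \<Longrightarrow> is_clique V E Z"
  unfolding is_clique_def by (meson subsetD subset_trans)

definition reconf_step :: "'a set \<Rightarrow> 'a set \<Rightarrow> bool" where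
  "reconf_step A B \<longleftrightarrow> (\<exists>v. (v \<notin> A \<and> B = insert v A) \<or> (v \<notin> B \<and> A = insert v B))"

lemma reconf_seq_iff:
  "reconf_seq V E C C' xs \<longleftrightarrow> xs \<noteq> [] \<and> hd xs = C \<and> last xs = C' \<and>
     (\<forall>D\<in>set xs. is_clique V E D) \<and> successively reconf_step xs"
  unfolding reconf_seq_def successively_conv_nth reconf_step_def by blast

lemma reconf_step_commute: "reconf_step A B = reconf_step B A"
  unfolding reconf_step_def by blast

lemma reconf_step_nested: "reconf_step A B \<Longrightarrow> A \<subseteq> B \<or> B \<subseteq> A"
  unfolding reconf_step_def by blast

lemma reconf_seq_rev: "reconf_seq V E C C' xs \<Longrightarrow> reconf_seq V E C' C (rev xs)"
  unfolding reconf_seq_iff successively_rev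
  by (simp add: reconf_step_commute hd_rev last_rev)

lemma reconf_seq_append:
  assumes "reconf_seq V E A B xs" "reconf_seq V E B C ys"
  shows "reconf_seq V E A C (xs @ tl ys)"
proof -
  obtain ys' where ys: "ys = B # ys'"
    using assms(2) unfolding reconf_seq_iff by (cases ys) auto
  have "successively reconf_step (xs @ ys')"
    using assms ys unfolding reconf_seq_iff
    by (cases ys') (auto simp: successively_append_iff)
  moreover have "last (xs @ ys') = C"
    using assms ys unfolding reconf_seq_iff by (cases ys') auto
  ultimately show ?thesis
    using assms ys unfolding reconf_seq_iff by auto
qed

lemma reconf_seq_grow:
  assumes "finite Q" "P \<subseteq> Q" "\<And>Z. P \<subseteq> Z \<Longrightarrow> Z \<subseteq> Q \<Longrightarrow> is_clique V E Z"
  shows "\<exists>xs. reconf_seq V E P Q xs \<and> (\<forall>Z\<in>set xs. P \<subseteq> Z \<and> Z \<subseteq> Q)"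
  using assms
proof (induction "card (Q - P)" arbitrary: Q)
  case 0
  then have "Q = P" using finite_subset[of "Q - P" Q] by auto
  with 0 show ?case by (intro exI[of _ "[P]"]) (auto simp: reconf_seq_def)
next
  case (Suc m)
  then obtain q where q: "q \<in> Q" "q \<notin> P"
    by (metis Diff_eq_empty_iff card.empty nat.distinct(1) subsetI)
  define Q' where "Q' = Q - {q}"
  have "m = card (Q' - P)"
    using Suc.hyps(2) q Suc.prems(1) by (simp add: Q'_def Diff_insert2[symmetric])
  moreover have "P \<subseteq> Q'" "finite Q'" "\<And>Z. P \<subseteq> Z \<Longrightarrow> Z \<subseteq> Q' \<Longrightarrow> is_clique V E Z"
    using Suc.prems q by (auto simp: Q'_def subset_Diff_insert)
  ultimately obtain xs where xs: "reconf_seq V E P Q' xs" "\<forall>Z\<in>set xs. P \<subseteq> Z \<and> Z \<subseteq> Q'"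
    using Suc.hyps(1) by blast
  have "reconf_step Q' Q"
    using q unfolding reconf_step_def Q'_def by (metis Diff_iff insert_Diff singletonI)
  then have "reconf_seq V E Q' Q [Q', Q]"
    using Suc.prems \<open>P \<subseteq> Q'\<close> by (simp add: reconf_seq_iff Q'_def)
  then have "reconf_seq V E P Q (xs @ [Q])"
    using reconf_seq_append[OF xs(1)] by fastforce
  moreover have "\<forall>Z\<in>set (xs @ [Q]). P \<subseteq> Z \<and> Z \<subseteq> Q" using xs(2) Suc.prems(2) by (auto simp: Q'_def)
  ultimately show ?case by blast
qed

lemma reconf_seq_nested:
  assumes "A \<subseteq> B \<or> B \<subseteq> A" "finite (A \<union> B)" "\<And>Z. Z \<subseteq> A \<union> B \<Longrightarrow> is_clique V E Z"
  shows "\<exists>ys. reconf_seq V E A B ys \<and> (\<forall>Z\<in>set ys. min (card A) (card B) \<le> card Z)"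
proof -
  have "\<exists>ys. reconf_seq V E A B ys \<and> (\<forall>Z\<in>set ys. A \<inter> B \<subseteq> Z \<and> Z \<subseteq> A \<union> B)"
    using assms(1)
  proof
    assume "A \<subseteq> B"
    then show ?thesis
      using reconf_seq_grow[of B A V E] assms(2,3) by (auto simp: Un_absorb1 Int_absorb2)
  next
    assume "B \<subseteq> A"
    then obtain ys where "reconf_seq V E B A ys" "\<forall>Z\<in>set ys. B \<subseteq> Z \<and> Z \<subseteq> A"
      using reconf_seq_grow[of A B V E] assms(2,3) by (auto simp: Un_absorb2)
    then show ?thesis
      using \<open>B \<subseteq> A\<close> by (intro exI[of _ "rev ys"]) (auto simp: reconf_seq_rev)
  qed
  moreover have "min (card A) (card B) = card (A \<inter> B)"
  proof (cases "A \<subseteq> B")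
    case True
    then show ?thesis using assms(2) card_mono[of B A] by (simp add: Int_absorb2)
  next
    case False
    then have "B \<subseteq> A" using assms(1) by blast
    then show ?thesis using assms(2) card_mono[of A B] by (simp add: Int_absorb1)
  qed
  moreover have "card (A \<inter> B) \<le> card Z" if "A \<inter> B \<subseteq> Z" "Z \<subseteq> A \<union> B" for Z
    using that assms(2) by (intro card_mono) (auto intro: rev_finite_subset)
  ultimately show ?thesis by metis
qed

text \<open>Each single step \<open>A \<leadsto> B\<close> of the given sequence becomes a monotone chain between
  the nested sets \<open>f A\<close> and \<open>f B\<close>.\<close>
lemma reconf_seq_lift:
  fixes f :: "'a set \<Rightarrow> 'b set" and R :: real
  assumes "reconf_seq V E C C' xs"
    and mono: "\<And>A B. A \<subseteq> B \<Longrightarrow> f A \<subseteq> f B"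
    and fin: "\<And>A. A \<in> set xs \<Longrightarrow> finite (f A)"
    and clique: "\<And>A Z. A \<in> set xs \<Longrightarrow> Z \<subseteq> f A \<Longrightarrow> is_clique V' E' Z"
    and large: "\<And>A. A \<in> set xs \<Longrightarrow> R \<le> card (f A)"
  shows "\<exists>ys. reconf_seq V' E' (f C) (f C') ys \<and> (\<forall>Z\<in>set ys. R \<le> card Z)"
  using assms(1) fin clique large
proof (induction xs arbitrary: C)
  case (Cons A xs)
  then have "A = C" by (simp add: reconf_seq_def)
  show ?case
  proof (cases xs)
    case Nil
    with Cons.prems \<open>A = C\<close> show ?thesis
      by (intro exI[of _ "[f C]"]) (auto simp: reconf_seq_def)
  next
    case (Cons B xs')
    with Cons.prems(1) have "reconf_step A B" "reconf_seq V E B C' xs"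
      unfolding reconf_seq_iff by auto
    obtain ys2 where ys2: "reconf_seq V' E' (f B) (f C') ys2" "\<forall>Z\<in>set ys2. R \<le> card Z"
      using Cons.IH[OF \<open>reconf_seq V E B C' xs\<close>] Cons.prems(2-4) by force
    have AB: "A \<in> set (A # xs)" "B \<in> set (A # xs)" using Cons by auto
    have nested: "f A \<subseteq> f B \<or> f B \<subseteq> f A"
      using reconf_step_nested[OF \<open>reconf_step A B\<close>] mono by blast
    then obtain L where "L \<in> set (A # xs)" "f A \<union> f B = f L"
      using AB by (metis sup.absorb1 sup.absorb2)
    then have "finite (f A \<union> f B)" "\<And>Z. Z \<subseteq> f A \<union> f B \<Longrightarrow> is_clique V' E' Z"
      using Cons.prems(2,3) by auto
    then obtain ys1 where ys1: "reconf_seq V' E' (f A) (f B) ys1"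
      "\<forall>Z\<in>set ys1. min (card (f A)) (card (f B)) \<le> card Z"
      using reconf_seq_nested[OF nested] by blast
    have "\<forall>Z\<in>set ys1. R \<le> card Z"
      using ys1(2) Cons.prems(4)[OF AB(1)] Cons.prems(4)[OF AB(2)] by force
    moreover have "set (tl ys2) \<subseteq> set ys2" by (cases ys2) auto
    ultimately show ?thesis
      using reconf_seq_append[OF ys1(1) ys2(1)] ys2(2) \<open>A = C\<close> by (intro exI[of _ "ys1 @ tl ys2"]) auto
  qed
qed (simp add: reconf_seq_def)

lemma finite_reconf_values:
  assumes "finite V"
  shows "finite {Min (card ` set xs) | xs. reconf_seq V E C C' xs}"
proof (rule finite_subset[of _ "{..card V}"])
  show "{Min (card ` set xs) | xs. reconf_seq V E C C' xs} \<subseteq> {..card V}"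
  proof
    fix k assume "k \<in> {Min (card ` set xs) | xs. reconf_seq V E C C' xs}"
    then obtain xs where xs: "reconf_seq V E C C' xs" "k = Min (card ` set xs)" by blast
    then have "hd xs \<in> set xs" "hd xs \<subseteq> V"
      by (auto simp: reconf_seq_def is_clique_def)
    then have "k \<le> card (hd xs)" "card (hd xs) \<le> card V"
      using xs(2) assms by (auto intro: card_mono)
    then show "k \<in> {..card V}" by simp
  qed
qed simp

lemma reconf_val_ge:
  assumes "finite V" "reconf_seq V E C C' ys" "\<And>Z. Z \<in> set ys \<Longrightarrow> R \<le> real (card Z)"
  shows "R \<le> real (reconf_val V E C C')"
proof -
  have "set ys \<noteq> {}" using assms(2) by (simp add: reconf_seq_def)
  then obtain Z where "Z \<in> set ys" "card Z = Min (card ` set ys)"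
    by (metis (no_types, lifting) List.finite_set Min_in empty_is_image finite_imageI imageE)
  moreover have "Min (card ` set ys) \<le> reconf_val V E C C'"
    unfolding reconf_val_def using finite_reconf_values[OF assms(1)] assms(2) by (intro Max_ge) auto
  ultimately show ?thesis using assms(3) by force
qed

lemma reconf_seq_exists:
  assumes "finite C" "finite C'" "is_clique V E C" "is_clique V E C'"
  shows "\<exists>xs. reconf_seq V E C C' xs"
proof -
  have from_empty: "\<exists>xs. reconf_seq V E {} D xs" if "finite D" "is_clique V E D" for D
  proof -
    have "\<And>Z. Z \<subseteq> D \<Longrightarrow> is_clique V E Z" using that(2) by (rule is_clique_subset)
    then show ?thesis using reconf_seq_grow[OF that(1), of "{}" V E] by auto
  qed
  obtain xs ys where "reconf_seq V E {} C xs" "reconf_seq V E {} C' ys"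
    using from_empty[OF assms(1,3)] from_empty[OF assms(2,4)] by blast
  then show ?thesis using reconf_seq_append[OF reconf_seq_rev] by blast
qed

lemma reconf_val_attained:
  assumes "finite V" "is_clique V E C" "is_clique V E C'"
  obtains xs where "reconf_seq V E C C' xs" "\<forall>A\<in>set xs. reconf_val V E C C' \<le> card A"
proof -
  have "finite C" "finite C'"
    using assms finite_subset by (auto simp: is_clique_def)
  then have "reconf_val V E C C' \<in> {Min (card ` set xs) | xs. reconf_seq V E C C' xs}"
    unfolding reconf_val_def using finite_reconf_values[OF assms(1)] reconf_seq_exists assms(2,3)
    by (intro Max_in) auto
  then obtain xs where "reconf_seq V E C C' xs" "reconf_val V E C C' = Min (card ` set xs)"
    by blast
  then show ?thesis using that by (metis List.finite_set Min_le finite_imageI image_eqI)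
qed

lemma reconf_val_lift:
  fixes f :: "'a set \<Rightarrow> 'b set" and R :: real
  assumes "finite V'" "reconf_seq V E C C' xs"
    and mono: "\<And>A B. A \<subseteq> B \<Longrightarrow> f A \<subseteq> f B"
    and fin: "\<And>A. A \<in> set xs \<Longrightarrow> finite (f A)"
    and clique: "\<And>A Z. A \<in> set xs \<Longrightarrow> Z \<subseteq> f A \<Longrightarrow> is_clique V' E' Z"
    and large: "\<And>A. A \<in> set xs \<Longrightarrow> R \<le> card (f A)"
  shows "R \<le> reconf_val V' E' (f C) (f C')"
proof -
  have "\<exists>ys. reconf_seq V' E' (f C) (f C') ys \<and> (\<forall>Z\<in>set ys. R \<le> card Z)"
    by (rule reconf_seq_lift[OF assms(2)]) (fact mono fin clique large)+
  then obtain ys where "reconf_seq V' E' (f C) (f C') ys" "\<forall>Z\<in>set ys. R \<le> card Z"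
    by blast
  then show ?thesis by (intro reconf_val_ge[OF assms(1)]) auto
qed

section \<open>Walks inside large cliques\<close>

lemma card_walks_in_Suc_ge:
  assumes "finite S" "\<And>u v. X u v \<Longrightarrow> X v u"
  shows "card S * (real (\<Sum>v\<in>S. card {u\<in>S. X v u}) / card S) ^ k \<le> card (walks_in X S (Suc k))"
proof -
  interpret finite_symmetric_graph S X using assms by unfold_locales
  show ?thesis
    using blakley_roy[of k] by (simp add: card_walks_in_Suc[OF assms(1)] edge_sum_def degree_def)
qed

lemma expander_average_degree_ge:
  assumes X: "expander n X d lam" and "0 < n" and S: "S \<subseteq> {0..<n}" "S \<noteq> {}"
  shows "d * (card S / n - 2 * (lam / d)) \<le> real (\<Sum>v\<in>S. card {u\<in>S. X v u}) / card S"
proof (cases "d = 0")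
  case False
  define \<mu> where "\<mu> = real (card S) / real n"
  have "card S > 0" using S finite_subset by (auto simp: card_gt_0_iff)
  have "0 \<le> lam" using expander_adj_form_ge(1)[OF X _ \<open>0 < n\<close>] False by simp
  moreover have "0 \<le> \<mu>" by (simp add: \<mu>_def)
  ultimately have "0 \<le> lam * \<mu>" "0 \<le> lam" by simp_all
  then have "lam * (1 - \<mu>) \<le> 2 * lam"
    by (simp add: right_diff_distrib)
  then have "d * (\<mu> - 2 * (lam / d)) \<le> \<mu> * d - lam * (1 - \<mu>)"
    using False by (simp add: right_diff_distrib)
  also have "\<dots> = (\<mu> * d * card S - lam * card S * (1 - \<mu>)) / card S"
    using \<open>card S > 0\<close> by (simp add: field_simps)
  also have "\<dots> \<le> real (\<Sum>v\<in>S. card {u\<in>S. X v u}) / card S"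
    using expander_mixing[OF X _ \<open>0 < n\<close> S(1)] False by (intro divide_right_mono) (auto simp: \<mu>_def)
  finally show ?thesis by (simp add: \<mu>_def)
qed (simp add: sum_nonneg)

lemma card_walks_in_ge:
  fixes \<beta> :: real
  assumes X: "expander n X d lam" and S: "S \<subseteq> {0..<n}"
    and \<beta>: "0 \<le> \<beta>" "\<beta> \<le> card S / n - 2 * (lam / d)"
  shows "real (card (walks n X l)) * \<beta> ^ l \<le> card (walks_in X S l)"
proof (cases l)
  case 0
  then show ?thesis by (simp add: walks_eq_walks_in)
next
  case (Suc k)
  have sym: "\<And>u v. X u v \<Longrightarrow> X v u" and reg: "regular n X d"
    using X by (auto simp: expander_def simple_graph_def)
  show ?thesis
  proof (cases "n = 0")
    case True
    then show ?thesis using card_walks_Suc[OF reg, of k] by (simp add: Suc)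
  next
    case False
    then have "0 < n" by simp
    have "0 \<le> lam / d"
      using expander_adj_form_ge(1)[OF X _ \<open>0 < n\<close>] by (cases "d = 0") auto
    then have "\<beta> \<le> card S / n" using \<beta>(2) by linarith
    then have n_\<beta>: "n * \<beta> \<le> card S" using \<open>0 < n\<close> by (simp add: field_simps)
    show ?thesis
    proof (cases "S = {}")
      case True
      then have "\<beta> = 0" using n_\<beta> \<beta>(1) \<open>0 < n\<close> by (simp add: mult_le_0_iff)
      then show ?thesis by (simp add: Suc)
    next
      case False
      have finite_S: "finite S" using S finite_subset by blast
      have "card (walks n X l) * \<beta> ^ l = (n * \<beta>) * (d * \<beta>) ^ k"
        by (simp add: Suc card_walks_Suc[OF reg] power_mult_distrib)
      also have "\<dots> \<le> card S * (d * \<beta>) ^ k"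
        using n_\<beta> \<beta>(1) by (intro mult_right_mono) auto
      also have "\<dots> \<le> card S * (real (\<Sum>v\<in>S. card {u\<in>S. X v u}) / card S) ^ k"
      proof -
        have "d * \<beta> \<le> real (\<Sum>v\<in>S. card {u\<in>S. X v u}) / card S"
          using mult_left_mono[OF \<beta>(2), of "real d"] expander_average_degree_ge[OF X \<open>0 < n\<close> S False]
          by simp
        then show ?thesis using \<beta>(1) by (intro mult_left_mono power_mono) simp_all
      qed
      also have "\<dots> \<le> card (walks_in X S l)"
        unfolding Suc by (rule card_walks_in_Suc_ge[OF finite_S sym])
      finally show ?thesis .
    qed
  qed
qed

lemma D_of_mono: "A \<subseteq> B \<Longrightarrow> D_of n X l A \<subseteq> D_of n X l B"
  by (auto simp: D_of_def)

lemma D_of_subset_walks: "D_of n X l C \<subseteq> walks n X l"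
  by (auto simp: D_of_def)

lemma finite_walks: "finite (walks n X l)"
  unfolding walks_eq_walks_in walks_in_def by (simp add: finite_lists_length_subset)

lemma is_clique_walk_adj:
  assumes "is_clique {0..<n} E C" "Z \<subseteq> D_of n X l C"
  shows "is_clique (walks n X l) (walk_adj E n) Z"
proof -
  have "walk_adj E n w1 w2" if "w1 \<in> Z" "w2 \<in> Z" "w1 \<noteq> w2" for w1 w2
  proof -
    have "set w1 \<union> set w2 \<subseteq> C" using assms(2) that by (auto simp: D_of_def)
    then show ?thesis using that(3) is_clique_subset[OF assms(1)] by (simp add: walk_adj_def)
  qed
  moreover have "Z \<subseteq> walks n X l" using assms(2) D_of_subset_walks by blast
  ultimately show ?thesis by (simp add: is_clique_def)
qed

theorem mainTheorem8:
  fixes n d :: nat and lam :: real and E X :: "nat \<Rightarrow> nat \<Rightarrow> bool"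
    and Cs Cg :: "nat set"
  defines "V \<equiv> {0..<n}"
  defines "\<omega> \<equiv> clique_number V E"
  defines "l \<equiv> nat \<lceil>log 2 (real n)\<rceil>"
  defines "W \<equiv> walks n X l"
  assumes G: "simple_graph V E"
    and Cs: "is_clique V E Cs" "card Cs = \<omega>"
    and Cg: "is_clique V E Cg" "card Cg = \<omega>"
    and X: "expander n X d lam"
    and base_nonneg: "(real \<omega> - 1) / real (card V) - 2 * (lam / real d) \<ge> 0"
    and hyp: "real (reconf_val V E Cs Cg) \<ge> real \<omega> - 1"
  shows "real (reconf_val W (walk_adj E n) (D_of n X l Cs) (D_of n X l Cg))
           \<ge> real (card W) * ((real \<omega> - 1) / real (card V) - 2 * (lam / real d)) ^ l"
proof -
  have "finite V" "card V = n" by (simp_all add: V_def)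
  obtain xs where xs: "reconf_seq V E Cs Cg xs"
    and xs_min: "\<forall>A\<in>set xs. reconf_val V E Cs Cg \<le> card A"
    using reconf_val_attained[OF \<open>finite V\<close> Cs(1) Cg(1)] .
  have large: "real \<omega> - 1 \<le> card A" and clique: "is_clique V E A" if "A \<in> set xs" for A
    using xs_min hyp xs that by (auto simp: reconf_seq_def)
  show ?thesis
    unfolding W_def
  proof (rule reconf_val_lift[OF finite_walks xs D_of_mono])
    fix A assume A: "A \<in> set xs"
    then have "A \<subseteq> {0..<n}" using clique by (simp add: is_clique_def V_def)
    show "finite (D_of n X l A)"
      by (rule finite_subset[OF D_of_subset_walks finite_walks])
    show "is_clique (walks n X l) (walk_adj E n) Z" if "Z \<subseteq> D_of n X l A" for Z
      using clique[OF A] that unfolding V_def by (rule is_clique_walk_adj)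
    show "real (card (walks n X l)) * ((real \<omega> - 1) / real (card V) - 2 * (lam / real d)) ^ l
        \<le> card (D_of n X l A)"
      unfolding D_of_eq_walks_in[OF \<open>A \<subseteq> {0..<n}\<close>]
      using large[OF A] \<open>card V = n\<close> base_nonneg
      by (intro card_walks_in_ge[OF X \<open>A \<subseteq> {0..<n}\<close>]) (auto intro: divide_right_mono)
  qed
qed

end
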